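(* Let $\Gamma$ be a finitely generated semigroup with identity $e$ and $\rho:\Gamma\to\mathrm{End}(G)$ an endomorphism action with $\rho(e)=\mathrm{Id}$ on a solenoid $G$. Then every $\rho$-basis of $\widehat G$ is $k$-regular for some positive integer $k$.
   Context: A solenoid is a compact connected finite-dimensional metrizable abelian group (dual $\widehat G$ torsion-free of finite rank). $\widehat\rho(\gamma)(\chi)=\chi\circ\rho(\gamma)$. A $\rho$-basis is a set $A\subset\widehat G$ generating $\widehat G$ as an abelian group with $A=\bigcup_{\gamma}\widehat\rho(\gamma)(F)$ for some finite $F\subset\widehat G$. For a discrete abelian group $H$ (written additively), a subset $B\subset H$ and $k>0$, $\mathbf Q_k(B)$ is the set of $h\in H$ satisfying an equation $n_0h=\sum_{j=1}^r n_ja_j$ with $a_1,\dots,a_r\in B$, integers $n_0\ne 0,n_1,\dots,n_r$, and $|n_0|+|n_1|+\cdots+|n_r|\le k$. A set $A\subset H$ is $k$-regular if there is an increasing sequence of finite sets $A_1\subset A_2\subset\cdots\subset A$ with $\bigcup_i A_i=A$ and $A_n\subset\mathbf Q_k(A_{n-1})$ for all $n\ge2$. *)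

theory Defs
  imports Main "HOL-Library.Countable_Set"
begin

text \<open>The discrete abelian group \<open>H\<close> (playing the role of the dual group of the solenoid)
  is modelled as a type of class \<open>ab_group_add\<close>; \<open>zmult n x\<close> is the integer multiple \<open>n x\<close>.\<close>

definition zmult :: "int \<Rightarrow> 'a::ab_group_add \<Rightarrow> 'a" where
  "zmult n x = (if 0 \<le> n then (((+) x) ^^ nat n) 0 else - ((((+) x) ^^ nat (- n)) 0))"

definition lincomb :: "(int \<times> 'a::ab_group_add) list \<Rightarrow> 'a" where
  "lincomb ps = sum_list (map (\<lambda>(n, a). zmult n a) ps)"

definition zspan :: "'a::ab_group_add set \<Rightarrow> 'a set" where
  "zspan B = {lincomb ps | ps. set (map snd ps) \<subseteq> B}"

definition torsion_free :: "'a::ab_group_add itself \<Rightarrow> bool" where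
  "torsion_free _ \<longleftrightarrow> (\<forall>(n::int) (x::'a). n \<noteq> 0 \<longrightarrow> zmult n x = 0 \<longrightarrow> x = 0)"

definition finite_rank :: "'a::ab_group_add itself \<Rightarrow> bool" where
  "finite_rank _ \<longleftrightarrow> (\<exists>X::'a set. finite X \<and> (\<forall>h. \<exists>n::int. n \<noteq> 0 \<and> zmult n h \<in> zspan X))"

definition solenoid_dual :: "'a::ab_group_add itself \<Rightarrow> bool" where
  "solenoid_dual T \<longleftrightarrow> countable (UNIV :: 'a set) \<and> torsion_free T \<and> finite_rank T"

definition finitely_generated_monoid :: "'g::monoid_mult itself \<Rightarrow> bool" where
  "finitely_generated_monoid _ \<longleftrightarrow>
     (\<exists>S::'g set. finite S \<and> (\<forall>g. \<exists>xs. set xs \<subseteq> S \<and> g = prod_list xs))"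

text \<open>Dual action \<open>\<rho>^(\<gamma>)(\<chi>) = \<chi> \<circ> \<rho>(\<gamma>)\<close> of an endomorphism action
  \<open>\<rho>\<close> with \<open>\<rho>(e) = Id\<close> and \<open>\<rho>(\<gamma>\<delta>) = \<rho>(\<gamma>) \<circ> \<rho>(\<delta>)\<close>:
  each \<open>\<rho>^(\<gamma>)\<close> is an endomorphism, \<open>\<rho>^(e) = id\<close>, \<open>\<rho>^(\<gamma>\<delta>) = \<rho>^(\<delta>) \<circ> \<rho>^(\<gamma>)\<close>.\<close>
definition dual_endo_action :: "('g::monoid_mult \<Rightarrow> 'a::ab_group_add \<Rightarrow> 'a) \<Rightarrow> bool" where
  "dual_endo_action rh \<longleftrightarrow>
     (\<forall>g x y. rh g (x + y) = rh g x + rh g y) \<and>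
     rh 1 = id \<and>
     (\<forall>g d. rh (g * d) = rh d \<circ> rh g)"

definition rho_basis :: "('g \<Rightarrow> 'a::ab_group_add \<Rightarrow> 'a) \<Rightarrow> 'a set \<Rightarrow> bool" where
  "rho_basis rh A \<longleftrightarrow> zspan A = UNIV \<and>
     (\<exists>F. finite F \<and> A = (\<Union>g. rh g ` F))"

definition Qk :: "nat \<Rightarrow> 'a::ab_group_add set \<Rightarrow> 'a set" where
  "Qk k B = {h. \<exists>(n0::int) ps. n0 \<noteq> 0 \<and> set (map snd ps) \<subseteq> B \<and>
                 zmult n0 h = lincomb ps \<and>
                 \<bar>n0\<bar> + sum_list (map (\<lambda>p. \<bar>fst p\<bar>) ps) \<le> int k}"

text \<open>\<open>A i\<close> here is \<open>A_{i+1}\<close> of the paper.\<close>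
definition k_regular :: "nat \<Rightarrow> 'a::ab_group_add set \<Rightarrow> bool" where
  "k_regular k A \<longleftrightarrow> (\<exists>As :: nat \<Rightarrow> 'a set.
     (\<forall>i. finite (As i)) \<and> (\<forall>i. As i \<subseteq> As (Suc i)) \<and> (\<forall>i. As i \<subseteq> A) \<and>
     (\<Union>i. As i) = A \<and> (\<forall>i. As (Suc i) \<subseteq> Qk k (As i)))"

end

theory Submission
  imports Defs
begin

(* Let S generate the monoid and A = (UN g. rh g ` F) with F finite. The sets A_n of all
   rh (s_1 * ... * s_m) f with m <= n, s_i in S and f in F are finite, increasing and exhaust A.
   As the group has finite rank, A contains a finite maximal independent set I, and every
   element of A has a nonzero multiple in the span of I. Choosing N with I inside A_N, the
   finite set A_(N+1) lies in Q_k(A_N) for some k. Since each rh g is an endomorphism, it maps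
   Q_k(B) into Q_k(rh g ` B); writing an element of A_(n+1) as rh u applied to an element of
   A_(N+1) propagates the inclusion to A_(n+1) in Q_k(A_n) for all n >= N. *)

lemma zmult_0 [simp]: "zmult 0 x = 0"
  by (simp add: zmult_def)

lemma zmult_add1: "zmult (n + 1) x = zmult n x + x"
proof -
  consider "0 \<le> n" | "n = -1" | "n < -1" by linarith
  then show ?thesis
  proof cases
    case 1
    then have "nat (n + 1) = Suc (nat n)" by simp
    with 1 show ?thesis by (simp add: zmult_def add.commute)
  next
    case 2
    then show ?thesis by (simp add: zmult_def)
  next
    case 3
    then have "nat (- n) = Suc (nat (- (n + 1)))" by simp
    with 3 show ?thesis by (simp add: zmult_def)
  qed
qed

lemma zmult_1 [simp]: "zmult 1 x = x"
  using zmult_add1[of 0 x] by simp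

lemma zmult_diff1: "zmult (n - 1) x = zmult n x - x"
  using zmult_add1[of "n - 1" x] by simp

lemma zmult_add: "zmult (m + n) x = zmult m x + zmult n x"
proof (induction m rule: int_induct[where k = 0])
  case (step1 i)
  have "zmult (i + 1 + n) x = zmult (i + n + 1) x" by (simp add: ac_simps)
  with step1 show ?case by (simp add: zmult_add1)
next
  case (step2 i)
  have "zmult (i - 1 + n) x = zmult (i + n - 1) x" by (simp add: algebra_simps)
  with step2 show ?case by (simp add: zmult_diff1)
qed simp

lemma zmult_minus: "zmult (- n) x = - zmult n x"
  using zmult_add[of n "- n" x] by (simp add: eq_neg_iff_add_eq_0 add.commute)

lemma zmult_diff: "zmult (m - n) x = zmult m x - zmult n x"
  using zmult_add[of m "- n" x] by (simp add: zmult_minus)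

lemma zmult_add_right: "zmult n (x + y) = zmult n x + zmult n y"
  by (induction n rule: int_induct[where k = 0]) (simp_all add: zmult_add1 zmult_diff1 algebra_simps)

lemma zmult_mult: "zmult (m * n) x = zmult m (zmult n x)"
proof (induction m rule: int_induct[where k = 0])
  case (step1 i)
  then show ?case by (simp add: zmult_add zmult_add1 distrib_right)
next
  case (step2 i)
  then show ?case by (simp add: left_diff_distrib zmult_diff zmult_diff1)
qed simp

lemma zmult_zero_right [simp]: "zmult n 0 = 0"
  using zmult_add_right[of n 0 0] by simp

lemma zmult_sum_right: "zmult n (sum f B) = (\<Sum>b\<in>B. zmult n (f b))"
  by (induction B rule: infinite_finite_induct) (simp_all add: zmult_add_right)

lemma zmult_sum_left: "zmult (sum f B) x = (\<Sum>b\<in>B. zmult (f b) x)"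
  by (induction B rule: infinite_finite_induct) (simp_all add: zmult_add)

lemma additive_zmult:
  assumes add: "\<And>x y. f (x + y) = f x + f y"
  shows "f (zmult n x) = zmult n (f x)"
proof (induction n rule: int_induct[where k = 0])
  case base
  show ?case using add[of 0 0] by simp
next
  case (step1 i)
  then show ?case by (simp add: zmult_add1 add)
next
  case (step2 i)
  have "f (y - z) = f y - f z" for y z
    using add[of "y - z" z] by (simp add: eq_diff_eq)
  with step2 show ?case by (simp only: zmult_diff1)
qed

lemma lincomb_Nil [simp]: "lincomb [] = 0"
  by (simp add: lincomb_def)

lemma lincomb_Cons [simp]: "lincomb ((n, a) # ps) = zmult n a + lincomb ps"
  by (simp add: lincomb_def)

lemma additive_lincomb:
  assumes add: "\<And>x y. f (x + y) = f x + f y"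
  shows "f (lincomb ps) = lincomb (map (\<lambda>(n, a). (n, f a)) ps)"
proof -
  have "f 0 = 0" using add[of 0 0] by simp
  then show ?thesis
    by (induction ps) (auto simp: add additive_zmult[of f, OF add])
qed

lemma Qk_mono: "k \<le> k' \<Longrightarrow> B \<subseteq> B' \<Longrightarrow> Qk k B \<subseteq> Qk k' B'"
  unfolding Qk_def by fastforce

lemma mem_Qk_self: "a \<in> B \<Longrightarrow> a \<in> Qk 2 B"
  unfolding Qk_def by (intro CollectI exI[of _ 1] exI[of _ "[(1, a)]"]) simp

lemma additive_image_Qk:
  assumes add: "\<And>x y. f (x + y) = f x + f y" and "h \<in> Qk k B"
  shows "f h \<in> Qk k (f ` B)"
proof -
  obtain n0 ps where n0: "n0 \<noteq> 0" and ps: "set (map snd ps) \<subseteq> B"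
    and eq: "zmult n0 h = lincomb ps" and size: "\<bar>n0\<bar> + sum_list (map (\<lambda>p. \<bar>fst p\<bar>) ps) \<le> int k"
    using assms(2) unfolding Qk_def by blast
  let ?fps = "map (\<lambda>(n, a). (n, f a)) ps"
  have "zmult n0 (f h) = lincomb ?fps"
    using eq by (simp add: additive_zmult[of f, OF add, symmetric] additive_lincomb[of f, OF add])
  moreover have "\<bar>n0\<bar> + sum_list (map (\<lambda>p. \<bar>fst p\<bar>) ?fps) \<le> int k"
  proof -
    have "map (\<lambda>p. \<bar>fst p\<bar>) ?fps = map (\<lambda>p. \<bar>fst p\<bar>) ps"
      by (induction ps) auto
    then show ?thesis using size by (simp only:)
  qed
  moreover have "set (map snd ?fps) \<subseteq> f ` B"
    using ps by auto
  ultimately show ?thesis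
    using n0 unfolding Qk_def by (intro CollectI exI[of _ n0] exI[of _ ?fps]) auto
qed

lemma mem_Qk_of_sum:
  assumes "finite I" "c0 \<noteq> 0" "zmult c0 a = (\<Sum>i\<in>I. zmult (c i) i)"
  shows "a \<in> Qk (nat (\<bar>c0\<bar> + (\<Sum>i\<in>I. \<bar>c i\<bar>))) I"
proof -
  obtain l where l: "set l = I" "distinct l"
    using finite_distinct_list[OF assms(1)] by blast
  define ps where "ps = map (\<lambda>i. (c i, i)) l"
  have "zmult c0 a = lincomb ps"
    using assms(3) l by (simp add: ps_def lincomb_def comp_def sum_list_distinct_conv_sum_set)
  moreover have "sum_list (map (\<lambda>p. \<bar>fst p\<bar>) ps) = (\<Sum>i\<in>I. \<bar>c i\<bar>)"
    using l by (simp add: ps_def comp_def sum_list_distinct_conv_sum_set)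
  moreover have "set (map snd ps) \<subseteq> I"
    using l by (auto simp: ps_def)
  moreover have "(\<Sum>i\<in>I. \<bar>c i\<bar>) \<ge> 0"
    by (simp add: sum_nonneg)
  ultimately show ?thesis
    using assms(2) unfolding Qk_def by (intro CollectI exI[of _ c0] exI[of _ ps]) auto
qed

lemma underdetermined_int_system_nontrivial_solution:
  fixes d :: "'i \<Rightarrow> 'x \<Rightarrow> int"
  assumes "finite X" "finite I" "card X < card I"
  shows "\<exists>c. (\<exists>i\<in>I. c i \<noteq> 0) \<and> (\<forall>x\<in>X. (\<Sum>i\<in>I. c i * d i x) = 0)"
  using assms
proof (induction X arbitrary: I d rule: finite_induct)
  case empty
  then obtain i where "i \<in> I" by fastforce
  then show ?case by (intro exI[of _ "\<lambda>_. 1"]) auto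
next
  case (insert x X)
  show ?case
  proof (cases "\<forall>i\<in>I. d i x = 0")
    case True
    with insert show ?thesis by fastforce
  next
    case False
    then obtain i0 where i0: "i0 \<in> I" "d i0 x \<noteq> 0" by blast
    \<comment> \<open>Gaussian elimination of the equation indexed by \<open>x\<close>, with pivot \<open>d i0 x\<close>\<close>
    define I' where "I' = I - {i0}"
    define d' where "d' i y = d i0 x * d i y - d i x * d i0 y" for i y
    have "finite I'" "card X < card I'"
      using i0 insert by (simp_all add: I'_def)
    then obtain c' where c': "\<exists>i\<in>I'. c' i \<noteq> 0" "\<forall>y\<in>X. (\<Sum>i\<in>I'. c' i * d' i y) = 0"
      using insert.IH by blast
    define c where "c i = (if i = i0 then - (\<Sum>j\<in>I'. c' j * d j x) else d i0 x * c' i)" for i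
    have eliminated: "(\<Sum>i\<in>I. c i * d i y) = (\<Sum>i\<in>I'. c' i * d' i y)" for y
    proof -
      have "(\<Sum>i\<in>I. c i * d i y) = c i0 * d i0 y + (\<Sum>i\<in>I'. c i * d i y)"
        using i0 insert.prems by (simp add: I'_def sum.remove)
      also have "(\<Sum>i\<in>I'. c i * d i y) = (\<Sum>i\<in>I'. d i0 x * c' i * d i y)"
        by (rule sum.cong) (auto simp: c_def I'_def)
      also have "c i0 * d i0 y = (\<Sum>j\<in>I'. - (c' j * d j x * d i0 y))"
        by (simp add: c_def sum_distrib_right sum_negf)
      finally show ?thesis
        by (simp add: d'_def sum.distrib[symmetric] algebra_simps sum_subtractf)
    qed
    show ?thesis
    proof (intro exI[of _ c] conjI)
      show "\<exists>i\<in>I. c i \<noteq> 0"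
        using c'(1) i0 by (auto simp: c_def I'_def)
      show "\<forall>y\<in>insert x X. (\<Sum>i\<in>I. c i * d i y) = 0"
        using c'(2) by (auto simp: eliminated d'_def)
    qed
  qed
qed

lemma zspan_finite_eq_sum:
  assumes "finite X" "h \<in> zspan X"
  shows "\<exists>d. h = (\<Sum>x\<in>X. zmult (d x) x)"
proof -
  have "\<exists>d. lincomb ps = (\<Sum>x\<in>X. zmult (d x) x)" if "set (map snd ps) \<subseteq> X" for ps
    using that
  proof (induction ps)
    case Nil
    show ?case by (rule exI[of _ "\<lambda>_. 0"]) simp
  next
    case (Cons p ps)
    obtain n a where p: "p = (n, a)" by (cases p)
    with Cons obtain d where d: "lincomb ps = (\<Sum>x\<in>X. zmult (d x) x)" and "a \<in> X"
      by auto
    have "(\<Sum>x\<in>X. zmult (d x + (if x = a then n else 0)) x)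
        = (\<Sum>x\<in>X. zmult (d x) x + (if x = a then zmult n a else 0))"
      by (rule sum.cong) (auto simp: zmult_add)
    also have "\<dots> = lincomb (p # ps)"
      using \<open>a \<in> X\<close> assms(1) by (simp add: p d sum.distrib add.commute)
    finally show ?case by metis
  qed
  then show ?thesis
    using assms(2) unfolding zspan_def by blast
qed

definition zindependent :: "'a::ab_group_add set \<Rightarrow> bool" where
  "zindependent B \<longleftrightarrow> (\<forall>c. (\<Sum>b\<in>B. zmult (c b) b) = 0 \<longrightarrow> (\<forall>b\<in>B. c b = 0))"

lemma card_zindependent_le:
  fixes X B :: "'a::ab_group_add set"
  assumes X: "finite X" "\<forall>h. \<exists>n::int. n \<noteq> 0 \<and> zmult n h \<in> zspan X"
    and B: "finite B" "zindependent B"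
  shows "card B \<le> card X"
proof (rule ccontr)
  assume "\<not> card B \<le> card X"
  then have less: "card X < card B" by simp
  have "\<forall>b. \<exists>n d. n \<noteq> 0 \<and> zmult n b = (\<Sum>x\<in>X. zmult (d x) x)"
    using X zspan_finite_eq_sum by metis
  then obtain n d where nd: "\<And>b::'a. n b \<noteq> 0" "\<And>b. zmult (n b) b = (\<Sum>x\<in>X. zmult (d b x) x)"
    by metis
  obtain c where c: "\<exists>b\<in>B. c b \<noteq> 0" "\<forall>x\<in>X. (\<Sum>b\<in>B. c b * d b x) = 0"
    using underdetermined_int_system_nontrivial_solution[OF X(1) B(1) less] by blast
  have "(\<Sum>b\<in>B. zmult (c b * n b) b) = (\<Sum>b\<in>B. \<Sum>x\<in>X. zmult (c b * d b x) x)"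
    by (simp add: zmult_mult nd zmult_sum_right)
  also have "\<dots> = (\<Sum>x\<in>X. zmult (\<Sum>b\<in>B. c b * d b x) x)"
    by (subst sum.swap) (simp add: zmult_sum_left)
  also have "\<dots> = 0"
    using c(2) by simp
  finally have "\<forall>b\<in>B. c b * n b = 0"
    using B(2) unfolding zindependent_def by metis
  then show False
    using c(1) nd(1) by auto
qed

lemma Qk_of_dependent_insert:
  assumes "finite I" "zindependent I" "\<not> zindependent (insert a I)" "a \<notin> I"
  shows "\<exists>k. a \<in> Qk k I"
proof -
  obtain c where c: "(\<Sum>b\<in>insert a I. zmult (c b) b) = 0" "\<exists>b\<in>insert a I. c b \<noteq> 0"
    using assms(3) unfolding zindependent_def by blast
  have rel: "zmult (c a) a + (\<Sum>b\<in>I. zmult (c b) b) = 0"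
    using c(1) assms(1,4) by simp
  have "c a \<noteq> 0"
  proof
    assume "c a = 0"
    with rel have "\<forall>b\<in>I. c b = 0"
      using assms(2) unfolding zindependent_def by simp
    with c(2) \<open>c a = 0\<close> show False by auto
  qed
  moreover have "zmult (c a) a = (\<Sum>b\<in>I. zmult (- c b) b)"
    using rel by (simp add: zmult_minus sum_negf eq_neg_iff_add_eq_0)
  ultimately show ?thesis
    using mem_Qk_of_sum[OF assms(1), of "c a" a "\<lambda>b. - c b"] by blast
qed

lemma finite_rank_imp_finite_Qk_generating_subset:
  fixes A :: "'a::ab_group_add set"
  assumes "finite_rank TYPE('a)"
  shows "\<exists>I\<subseteq>A. finite I \<and> (\<forall>a\<in>A. \<exists>k. a \<in> Qk k I)"
proof -
  obtain X :: "'a set" where X: "finite X" "\<forall>h. \<exists>n::int. n \<noteq> 0 \<and> zmult n h \<in> zspan X"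
    using assms unfolding finite_rank_def by blast
  let ?indep = "\<lambda>B. B \<subseteq> A \<and> finite B \<and> zindependent B"
  have "?indep {}"
    by (simp add: zindependent_def)
  moreover have "\<forall>B. ?indep B \<longrightarrow> card B < Suc (card X)"
    using card_zindependent_le[OF X] by (auto simp: less_Suc_eq_le)
  ultimately obtain I where I: "?indep I" and max: "\<And>B. ?indep B \<Longrightarrow> card B \<le> card I"
    using ex_has_greatest_nat[of ?indep "{}" card "Suc (card X)"] by blast
  have "\<exists>k. a \<in> Qk k I" if "a \<in> A" for a
  proof (cases "a \<in> I")
    case True
    then show ?thesis using mem_Qk_self by blast
  next
    case False
    with I max[of "insert a I"] \<open>a \<in> A\<close> have "\<not> zindependent (insert a I)"
      by auto
    with I False show ?thesis
      using Qk_of_dependent_insert by blast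
  qed
  with I show ?thesis by blast
qed

lemma finite_subset_UN_mono:
  fixes P :: "nat \<Rightarrow> 'a set"
  assumes "mono P" "finite B" "B \<subseteq> (\<Union>n. P n)"
  shows "\<exists>n. B \<subseteq> P n"
  using assms(2,3)
proof (induction B rule: finite_induct)
  case (insert b B)
  then obtain m n where "b \<in> P m" "B \<subseteq> P n" by blast
  moreover have "P m \<subseteq> P (max m n)" "P n \<subseteq> P (max m n)"
    by (simp_all add: monoD[OF assms(1)])
  ultimately have "insert b B \<subseteq> P (max m n)"
    by blast
  then show ?case by blast
qed simp

lemma k_regular_if_eventually_Qk:
  fixes B :: "nat \<Rightarrow> 'a::ab_group_add set"
  assumes "\<And>n. finite (B n)" "mono B" "(\<Union>n. B n) = A"
    and "\<And>n. N \<le> n \<Longrightarrow> B (Suc n) \<subseteq> Qk k (B n)"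
  shows "k_regular k A"
  unfolding k_regular_def
proof (intro exI[of _ "\<lambda>i. B (N + i)"] conjI allI)
  have "B n \<subseteq> B (N + n)" for n
    using monoD[OF assms(2)] by simp
  then show "(\<Union>i. B (N + i)) = A"
    using assms(3) by blast
qed (use assms monoD[OF assms(2)] in auto)

definition orbit_ball :: "('g::monoid_mult \<Rightarrow> 'a \<Rightarrow> 'a) \<Rightarrow> 'g set \<Rightarrow> 'a set \<Rightarrow> nat \<Rightarrow> 'a set" where
  "orbit_ball rh S F n = {rh (prod_list xs) f | xs f. set xs \<subseteq> S \<and> length xs \<le> n \<and> f \<in> F}"

lemma finite_orbit_ball:
  assumes "finite S" "finite F"
  shows "finite (orbit_ball rh S F n)"
proof -
  have "orbit_ball rh S F n = (\<lambda>(xs, f). rh (prod_list xs) f) ` ({xs. set xs \<subseteq> S \<and> length xs \<le> n} \<times> F)"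
    unfolding orbit_ball_def by auto
  then show ?thesis
    using assms by (simp add: finite_lists_length_le)
qed

lemma mono_orbit_ball: "mono (orbit_ball rh S F)"
  unfolding orbit_ball_def mono_def by (blast intro: order_trans)

lemma UN_orbit_ball:
  assumes "\<And>g. \<exists>xs. set xs \<subseteq> S \<and> g = prod_list xs"
  shows "(\<Union>n. orbit_ball rh S F n) = (\<Union>g. rh g ` F)"
proof (intro equalityI subsetI)
  fix y assume "y \<in> (\<Union>g. rh g ` F)"
  then obtain g f where "f \<in> F" "y = rh g f" by blast
  moreover obtain xs where "set xs \<subseteq> S" "g = prod_list xs"
    using assms by blast
  ultimately have "y \<in> orbit_ball rh S F (length xs)"
    unfolding orbit_ball_def by blast
  then show "y \<in> (\<Union>n. orbit_ball rh S F n)" by blast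
qed (auto simp: orbit_ball_def)

lemma orbit_ball_add_split:
  assumes comp: "\<And>g d. rh (g * d) = rh d \<circ> rh g"
    and "h \<in> orbit_ball rh S F (m + n)"
  obtains u v where "set u \<subseteq> S" "length u \<le> n" "v \<in> orbit_ball rh S F m" "h = rh (prod_list u) v"
proof -
  obtain xs f where xs: "set xs \<subseteq> S" "length xs \<le> m + n" "f \<in> F" "h = rh (prod_list xs) f"
    using assms(2) unfolding orbit_ball_def by blast
  have "prod_list xs = prod_list (take m xs) * prod_list (drop m xs)"
    by (metis append_take_drop_id prod_list.append)
  then have "h = rh (prod_list (drop m xs)) (rh (prod_list (take m xs)) f)"
    using xs(4) comp by simp
  moreover have "rh (prod_list (take m xs)) f \<in> orbit_ball rh S F m"
    using xs(1,3) set_take_subset[of m xs] unfolding orbit_ball_def by fastforce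
  moreover have "set (drop m xs) \<subseteq> S" "length (drop m xs) \<le> n"
    using xs(1,2) by (auto dest: in_set_dropD)
  ultimately show ?thesis using that by blast
qed

lemma image_orbit_ball_subset:
  assumes comp: "\<And>g d. rh (g * d) = rh d \<circ> rh g" and "set u \<subseteq> S"
  shows "rh (prod_list u) ` orbit_ball rh S F n \<subseteq> orbit_ball rh S F (n + length u)"
proof
  fix y assume "y \<in> rh (prod_list u) ` orbit_ball rh S F n"
  then obtain xs f where xs: "set xs \<subseteq> S" "length xs \<le> n" "f \<in> F" "y = rh (prod_list u) (rh (prod_list xs) f)"
    unfolding orbit_ball_def by blast
  then have "y = rh (prod_list (xs @ u)) f"
    using comp by simp
  with xs(1-3) \<open>set u \<subseteq> S\<close> show "y \<in> orbit_ball rh S F (n + length u)"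
    unfolding orbit_ball_def by fastforce
qed

lemma orbit_ball_Qk_step_propagates:
  assumes add: "\<And>g x y. rh g (x + y) = rh g x + rh g y"
    and comp: "\<And>g d. rh (g * d) = rh d \<circ> rh g"
    and step: "orbit_ball rh S F (Suc N) \<subseteq> Qk k (orbit_ball rh S F N)"
    and "N \<le> n"
  shows "orbit_ball rh S F (Suc n) \<subseteq> Qk k (orbit_ball rh S F n)"
proof
  fix h assume "h \<in> orbit_ball rh S F (Suc n)"
  then have "h \<in> orbit_ball rh S F (Suc N + (n - N))"
    using \<open>N \<le> n\<close> by simp
  then obtain u v where u: "set u \<subseteq> S" "length u \<le> n - N"
    and v: "v \<in> orbit_ball rh S F (Suc N)" and h: "h = rh (prod_list u) v"
    using orbit_ball_add_split[OF comp] by blast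
  have "h \<in> Qk k (rh (prod_list u) ` orbit_ball rh S F N)"
    using v step additive_image_Qk[of "rh (prod_list u)", OF add] unfolding h by blast
  also have "\<dots> \<subseteq> Qk k (orbit_ball rh S F n)"
  proof (rule Qk_mono[OF order_refl])
    have "orbit_ball rh S F (N + length u) \<subseteq> orbit_ball rh S F n"
      using u(2) \<open>N \<le> n\<close> by (intro monoD[OF mono_orbit_ball]) simp
    then show "rh (prod_list u) ` orbit_ball rh S F N \<subseteq> orbit_ball rh S F n"
      using image_orbit_ball_subset[of rh, OF comp u(1)] by blast
  qed
  finally show "h \<in> Qk k (orbit_ball rh S F n)" .
qed

theorem proposition4p8:
  fixes rh :: "'g::monoid_mult \<Rightarrow> 'a::ab_group_add \<Rightarrow> 'a"
    and A :: "'a set"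
  assumes "finitely_generated_monoid TYPE('g)"
    and "solenoid_dual TYPE('a)"
    and "dual_endo_action rh"
    and "rho_basis rh A"
  shows "\<exists>k>0. k_regular k A"
proof -
  obtain S :: "'g set" where S: "finite S" "\<And>g. \<exists>xs. set xs \<subseteq> S \<and> g = prod_list xs"
    using assms(1) unfolding finitely_generated_monoid_def by blast
  have add: "\<And>g x y. rh g (x + y) = rh g x + rh g y" and comp: "\<And>g d. rh (g * d) = rh d \<circ> rh g"
    using assms(3) unfolding dual_endo_action_def by auto
  obtain F where F: "finite F" "A = (\<Union>g. rh g ` F)"
    using assms(4) unfolding rho_basis_def by blast
  let ?ball = "orbit_ball rh S F"
  have balls: "\<And>n. finite (?ball n)" "mono ?ball" "(\<Union>n. ?ball n) = A"
    using finite_orbit_ball[OF S(1) F(1)] mono_orbit_ball UN_orbit_ball[OF S(2)] F(2) by simp_all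
  obtain I where I: "I \<subseteq> A" "finite I" "\<forall>a\<in>A. \<exists>k. a \<in> Qk k I"
    using assms(2) finite_rank_imp_finite_Qk_generating_subset[of A] unfolding solenoid_dual_def by blast
  obtain N where N: "I \<subseteq> ?ball N"
    using finite_subset_UN_mono[OF balls(2) I(2)] I(1) balls(3) by blast
  have "mono (\<lambda>k. Qk k I)"
    by (intro monoI Qk_mono) simp_all
  moreover have "?ball (Suc N) \<subseteq> (\<Union>k. Qk k I)"
    using I(3) balls(3) by blast
  ultimately obtain k where "?ball (Suc N) \<subseteq> Qk k I"
    using finite_subset_UN_mono balls(1) by blast
  then have "?ball (Suc N) \<subseteq> Qk (Suc k) (?ball N)"
    using Qk_mono[OF le_SucI[OF order_refl] N] by blast
  then have "?ball (Suc n) \<subseteq> Qk (Suc k) (?ball n)" if "N \<le> n" for n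
    using orbit_ball_Qk_step_propagates[of rh, OF add comp _ that] by blast
  then have "k_regular (Suc k) A"
    by (rule k_regular_if_eventually_Qk[OF balls])
  then show ?thesis by blast
qed

end
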